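(* (1) For every $k\geq 1$, every orderable $k$-hypergraph is separable. (2) For $k=1,2$, every separable $k$-hypergraph is orderable; but for each $k\geq 3$ there exists a separable $k$-hypergraph that is not orderable.
   Context: A $k$-hypergraph on a finite set $V$ is a set $\mathcal{H}$ of $k$-element subsets of $V$. Let $n=|V|$. $\mathcal{H}$ is orderable if there is an ordering $v_1,\dots,v_n$ of $V$ such that each $v_i$ is either dominating, meaning $E\in\mathcal{H}$ for every $k$-set $E$ with $v_i\in E\subseteq\{v_1,\dots,v_i\}$, or isolating, meaning $E\notin\mathcal{H}$ for every $k$-set $E$ with $v_i\in E\subseteq\{v_1,\dots,v_i\}$. $\mathcal{H}$ is separable if there is a labeling $a:V\to\mathbb{Z}$ such that $\mathcal{H}=\{E\subseteq V:|E|=k,\ \sum_{v\in E}a(v)\geq 0\}$. *)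

theory Defs
  imports Main
begin

definition is_hypergraph :: "nat \<Rightarrow> 'a set \<Rightarrow> 'a set set \<Rightarrow> bool" where
  "is_hypergraph k V H \<longleftrightarrow> finite V \<and> (\<forall>E\<in>H. E \<subseteq> V \<and> card E = k)"

definition dominating :: "nat \<Rightarrow> 'a set set \<Rightarrow> 'a list \<Rightarrow> nat \<Rightarrow> bool" where
  "dominating k H vs i \<longleftrightarrow>
     (\<forall>E. card E = k \<and> vs ! i \<in> E \<and> E \<subseteq> set (take (Suc i) vs) \<longrightarrow> E \<in> H)"

definition isolating :: "nat \<Rightarrow> 'a set set \<Rightarrow> 'a list \<Rightarrow> nat \<Rightarrow> bool" where
  "isolating k H vs i \<longleftrightarrow>
     (\<forall>E. card E = k \<and> vs ! i \<in> E \<and> E \<subseteq> set (take (Suc i) vs) \<longrightarrow> E \<notin> H)"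

definition orderable :: "nat \<Rightarrow> 'a set \<Rightarrow> 'a set set \<Rightarrow> bool" where
  "orderable k V H \<longleftrightarrow>
     (\<exists>vs. distinct vs \<and> set vs = V \<and>
        (\<forall>i < length vs. dominating k H vs i \<or> isolating k H vs i))"

definition separable :: "nat \<Rightarrow> 'a set \<Rightarrow> 'a set set \<Rightarrow> bool" where
  "separable k V H \<longleftrightarrow>
     (\<exists>a :: 'a \<Rightarrow> int. H = {E. E \<subseteq> V \<and> card E = k \<and> (\<Sum>v\<in>E. a v) \<ge> 0})"

end

theory Submission
  imports Defs
begin

text \<open>
  Orderable implies separable: label the vertices along the ordering, giving each new vertex a
  weight whose absolute value exceeds the total absolute weight of its predecessors, positive if
  it is dominating and negative if it is isolating; the new vertex then decides the sign of every
  k-set in which it is the last vertex.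

  Separable implies orderable for k \<le> 2: list the vertices by increasing absolute weight,
  negative before positive on ties; the sign of a(u) + a(x) with u listed before x is the sign
  of a(x).

  For k \<ge> 3, take k + 1 vertices with weights 1, 1, -1, -1, 0, ..., 0. The total weight is 0,
  so V - {w} is an edge iff a(w) \<le> 0. Whichever vertex comes last, it lies in an edge
  V - {w} with a(w) = -1 and in a non-edge V - {w'} with a(w') = 1.
\<close>

definition separates :: "('a \<Rightarrow> int) \<Rightarrow> nat \<Rightarrow> 'a set \<Rightarrow> 'a set set \<Rightarrow> bool" where
  "separates a k V H \<longleftrightarrow> (\<forall>E. E \<subseteq> V \<and> card E = k \<longrightarrow> (E \<in> H \<longleftrightarrow> 0 \<le> sum a E))"

lemma separable_iff_separates:
  assumes "is_hypergraph k V H"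
  shows "separable k V H \<longleftrightarrow> (\<exists>a. separates a k V H)"
proof
  assume "separable k V H"
  then obtain a :: "'a \<Rightarrow> int" where "H = {E. E \<subseteq> V \<and> card E = k \<and> 0 \<le> sum a E}"
    unfolding separable_def ..
  then have "separates a k V H"
    unfolding separates_def by simp
  then show "\<exists>a. separates a k V H"
    by (rule exI[of _ a])
next
  assume "\<exists>a. separates a k V H"
  then obtain a where "separates a k V H" ..
  then have "H = {E. E \<subseteq> V \<and> card E = k \<and> 0 \<le> sum a E}"
    using assms unfolding separates_def is_hypergraph_def by blast
  then show "separable k V H"
    unfolding separable_def by (rule exI[of _ a])
qed

lemma dominating_or_isolating_iff:
  "dominating k H vs i \<or> isolating k H vs i \<longleftrightarrow>
     (\<exists>P. \<forall>E. card E = k \<and> vs ! i \<in> E \<and> E \<subseteq> set (take (Suc i) vs) \<longrightarrow> (E \<in> H \<longleftrightarrow> P))"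
    (is "_ \<longleftrightarrow> (\<exists>P. ?uniform P)")
proof
  assume "dominating k H vs i \<or> isolating k H vs i"
  then have "?uniform True \<or> ?uniform False"
    unfolding dominating_def isolating_def by simp
  then show "\<exists>P. ?uniform P"
    by blast
next
  assume "\<exists>P. ?uniform P"
  then obtain P where "?uniform P" ..
  then show "dominating k H vs i \<or> isolating k H vs i"
    unfolding dominating_def isolating_def by (cases P) simp_all
qed

lemma take_Suc_append_nth:
  assumes "i < length vs"
  shows "take (Suc i) (vs @ ws) = take (Suc i) vs" "(vs @ ws) ! i = vs ! i"
  using assms by (simp_all add: nth_append)

lemma dominating_append:
  "i < length vs \<Longrightarrow> dominating k H (vs @ ws) i = dominating k H vs i"
  unfolding dominating_def by (simp only: take_Suc_append_nth)

lemma isolating_append: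
  "i < length vs \<Longrightarrow> isolating k H (vs @ ws) i = isolating k H vs i"
  unfolding isolating_def by (simp only: take_Suc_append_nth)

lemma separates_insert:
  assumes "finite U" and a: "separates a k U H"
    and v: "\<forall>E. card E = k \<and> v \<in> E \<and> E \<subseteq> insert v U \<longrightarrow> (E \<in> H \<longleftrightarrow> P)"
  shows "\<exists>b. separates b k (insert v U) H"
proof -
  define S where "S = (\<Sum>u\<in>U. \<bar>a u\<bar>)"
  define b where "b = a(v := if P then 1 + S else -(1 + S))"
  have "E \<in> H \<longleftrightarrow> 0 \<le> sum b E" if E: "E \<subseteq> insert v U" "card E = k" for E
  proof (cases "v \<in> E")
    case False
    then have "sum b E = sum a E"
      unfolding b_def by (intro sum.cong) auto
    with False E a show ?thesis
      unfolding separates_def by auto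
  next
    case True
    have rest: "E - {v} \<subseteq> U"
      using E by auto
    then have "finite (E - {v})"
      using \<open>finite U\<close> finite_subset by blast
    then have "sum b E = b v + sum a (E - {v})"
      using True unfolding b_def by (simp add: sum.remove)
    moreover have "\<bar>sum a (E - {v})\<bar> \<le> S"
    proof -
      have "\<bar>sum a (E - {v})\<bar> \<le> (\<Sum>u\<in>E - {v}. \<bar>a u\<bar>)"
        by (rule sum_abs)
      also have "\<dots> \<le> S"
        unfolding S_def using \<open>finite U\<close> rest by (rule sum_mono2) simp
      finally show ?thesis .
    qed
    ultimately have "0 \<le> sum b E \<longleftrightarrow> P"
      unfolding b_def by auto
    with v E True show ?thesis
      by blast
  qed
  then show ?thesis
    unfolding separates_def by blast
qed

lemma separates_if_dominating_or_isolating: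
  assumes "k \<ge> 1" and "\<forall>i < length vs. dominating k H vs i \<or> isolating k H vs i"
  shows "\<exists>a. separates a k (set vs) H"
  using assms(2)
proof (induction vs rule: rev_induct)
  case Nil
  show ?case
    using \<open>k \<ge> 1\<close> by (simp add: separates_def)
next
  case (snoc v vs)
  have "\<forall>i < length vs. dominating k H vs i \<or> isolating k H vs i"
  proof (intro allI impI)
    fix i
    assume i: "i < length vs"
    then have "dominating k H (vs @ [v]) i \<or> isolating k H (vs @ [v]) i"
      using snoc.prems by simp
    with i show "dominating k H vs i \<or> isolating k H vs i"
      by (simp add: dominating_append isolating_append)
  qed
  then obtain a where "separates a k (set vs) H"
    using snoc.IH by blast
  moreover have "\<exists>P. \<forall>E. card E = k \<and> v \<in> E \<and> E \<subseteq> insert v (set vs) \<longrightarrow> (E \<in> H \<longleftrightarrow> P)"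
    using snoc.prems dominating_or_isolating_iff[of k H "vs @ [v]" "length vs"] by simp
  ultimately show ?case
    using separates_insert[of "set vs" _ k H v] by auto
qed

text \<open>Sends 0, -1, 1, -2, 2, ... to 0, 1, 2, 3, 4, ...: by absolute value, negatives first.\<close>
definition magnitude_rank :: "int \<Rightarrow> int" where
  "magnitude_rank p = (if 0 \<le> p then 2 * p else -2 * p - 1)"

lemma sum_nonneg_iff_if_magnitude_rank_le:
  "magnitude_rank p \<le> magnitude_rank q \<Longrightarrow> 0 \<le> p + q \<longleftrightarrow> 0 \<le> q"
  unfolding magnitude_rank_def by (auto split: if_splits)

lemma sorted_key_take_le:
  assumes "sorted (map f vs)" "i < length vs" "u \<in> set (take (Suc i) vs)"
  shows "f u \<le> f (vs ! i)"
proof -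
  obtain j where "j < length (take (Suc i) vs)" "take (Suc i) vs ! j = u"
    using assms(3) by (meson in_set_conv_nth)
  then have "j \<le> i" "vs ! j = u"
    by simp_all
  then show ?thesis
    using sorted_nth_mono[OF assms(1), of j i] assms(2) by simp
qed

lemma orderable_if_separates:
  assumes k: "k = 1 \<or> k = 2" and "finite V" and a: "separates a k V H"
  shows "orderable k V H"
proof -
  obtain xs where xs: "distinct xs" "set xs = V"
    using finite_distinct_list[OF \<open>finite V\<close>] by blast
  define vs where "vs = sort_key (magnitude_rank \<circ> a) xs"
  have vs: "distinct vs" "set vs = V" "sorted (map (magnitude_rank \<circ> a) vs)"
    using xs unfolding vs_def by simp_all
  have "dominating k H vs i \<or> isolating k H vs i" if i: "i < length vs" for i
  proof -
    let ?x = "vs ! i"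
    have "E \<in> H \<longleftrightarrow> 0 \<le> a ?x"
      if E: "card E = k" "?x \<in> E" "E \<subseteq> set (take (Suc i) vs)" for E
    proof -
      have "0 \<le> sum a E \<longleftrightarrow> 0 \<le> a ?x"
      proof (cases "k = 1")
        case True
        then obtain y where "E = {y}"
          using E(1) card_1_singletonE by blast
        with E(2) show ?thesis
          by simp
      next
        case False
        with k E(1) have "card E = 2"
          by simp
        then obtain y z where "E = {y, z}" "y \<noteq> z"
          unfolding card_2_iff by blast
        with E(2) obtain u where u: "E = {u, ?x}" "u \<noteq> ?x"
          by blast
        then have "magnitude_rank (a u) \<le> magnitude_rank (a ?x)"
          using sorted_key_take_le[OF vs(3) i] E(3) by auto
        with u show ?thesis
          by (simp add: sum_nonneg_iff_if_magnitude_rank_le)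
      qed
      moreover have "set (take (Suc i) vs) \<subseteq> V"
        unfolding vs(2)[symmetric] by (rule set_take_subset)
      with E(3) have "E \<subseteq> V"
        by (rule subset_trans)
      ultimately show ?thesis
        using a E(1) unfolding separates_def by blast
    qed
    then show ?thesis
      unfolding dominating_or_isolating_iff by blast
  qed
  with vs show ?thesis
    unfolding orderable_def by blast
qed

lemma not_orderable_if_last_vertex_undecided:
  assumes card: "card V = Suc k"
    and undecided: "\<And>v. v \<in> V \<Longrightarrow> \<exists>w\<in>V - {v}. \<exists>w'\<in>V - {v}. V - {w} \<in> H \<and> V - {w'} \<notin> H"
  shows "\<not> orderable k V H"
proof
  assume "orderable k V H"
  then obtain vs where vs: "distinct vs" "set vs = V"
    and ord: "\<forall>i < length vs. dominating k H vs i \<or> isolating k H vs i"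
    unfolding orderable_def by blast
  have len: "length vs = Suc k"
    using distinct_card[OF vs(1)] vs(2) card by simp
  then obtain P where P: "\<forall>E. card E = k \<and> vs ! k \<in> E \<and> E \<subseteq> V \<longrightarrow> (E \<in> H \<longleftrightarrow> P)"
    using ord vs(2) dominating_or_isolating_iff[of k H vs k] by auto
  have last: "vs ! k \<in> V"
    using len vs(2) nth_mem by fastforce
  have "finite V"
    using card card.infinite by fastforce
  have "V - {u} \<in> H \<longleftrightarrow> P" if "u \<in> V - {vs ! k}" for u
  proof -
    have "card (V - {u}) = k"
      using that card \<open>finite V\<close> by simp
    moreover have "vs ! k \<in> V - {u}"
      using that last by auto
    ultimately show ?thesis
      using P by blast
  qed
  with undecided[OF last] show False
    by blast
qed

definition example_weight :: "nat \<Rightarrow> int" where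
  "example_weight n = (if n < 2 then 1 else if n < 4 then -1 else 0)"

lemma sum_example_weight:
  assumes "k \<ge> 3"
  shows "sum example_weight {0..k} = 0"
proof -
  have "sum example_weight {0..k} = sum example_weight {0..3}"
    using assms by (intro sum.mono_neutral_right) (auto simp: example_weight_def)
  also have "\<dots> = 0"
    by (simp add: example_weight_def numeral_eq_Suc)
  finally show ?thesis .
qed

lemma separable_not_orderable_example:
  fixes k :: nat
  assumes "k \<ge> 3"
  defines "V \<equiv> {0..k}"
    and "H \<equiv> {E. E \<subseteq> {0..k} \<and> card E = k \<and> 0 \<le> sum example_weight E}"
  shows "is_hypergraph k V H" "separable k V H" "\<not> orderable k V H"
proof -
  show "is_hypergraph k V H"
    unfolding is_hypergraph_def H_def V_def by auto
  show "separable k V H"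
    unfolding separable_def H_def V_def by (rule exI[of _ example_weight]) (rule refl)
  have complement: "V - {w} \<in> H \<longleftrightarrow> example_weight w \<le> 0" if "w \<in> V" for w
  proof -
    have "sum example_weight (V - {w}) = - example_weight w"
      using sum_diff1[of V example_weight w] sum_example_weight[OF assms(1)] that
      unfolding V_def by simp
    then show ?thesis
      using that unfolding H_def V_def by simp
  qed
  show "\<not> orderable k V H"
  proof (rule not_orderable_if_last_vertex_undecided)
    show "card V = Suc k"
      unfolding V_def by simp
    fix v
    obtain w :: nat where "w \<in> {2, 3}" "w \<noteq> v"
      by (cases "v = 2") auto
    moreover obtain w' :: nat where "w' \<in> {0, 1}" "w' \<noteq> v"
      by (cases "v = 0") auto
    ultimately show "\<exists>w\<in>V - {v}. \<exists>w'\<in>V - {v}. V - {w} \<in> H \<and> V - {w'} \<notin> H"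
      using assms(1) complement unfolding V_def
      by (intro bexI[of _ w] bexI[of _ w']) (auto simp: example_weight_def)
  qed
qed

theorem proposition3:
  shows "(\<forall>(k::nat) (V::'a set) H. k \<ge> 1 \<longrightarrow> is_hypergraph k V H \<longrightarrow>
            orderable k V H \<longrightarrow> separable k V H)
       \<and> (\<forall>(k::nat) (V::'a set) H. (k = 1 \<or> k = 2) \<longrightarrow> is_hypergraph k V H \<longrightarrow>
            separable k V H \<longrightarrow> orderable k V H)
       \<and> (\<forall>k::nat. k \<ge> 3 \<longrightarrow>
            (\<exists>(V::nat set) H. is_hypergraph k V H \<and> separable k V H \<and> \<not> orderable k V H))"
proof (intro conjI allI impI)
  fix k :: nat and V :: "'a set" and H
  assume "k \<ge> 1" and hyp: "is_hypergraph k V H" and "orderable k V H"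
  then obtain vs where "set vs = V" "\<forall>i < length vs. dominating k H vs i \<or> isolating k H vs i"
    unfolding orderable_def by blast
  with \<open>k \<ge> 1\<close> obtain a where "separates a k V H"
    using separates_if_dominating_or_isolating by blast
  with hyp show "separable k V H"
    using separable_iff_separates by blast
next
  fix k :: nat and V :: "'a set" and H
  assume k: "k = 1 \<or> k = 2" and hyp: "is_hypergraph k V H" and "separable k V H"
  then obtain a where "separates a k V H"
    using separable_iff_separates by blast
  moreover have "finite V"
    using hyp unfolding is_hypergraph_def by blast
  ultimately show "orderable k V H"
    using k orderable_if_separates by blast
next
  fix k :: nat
  assume "k \<ge> 3"
  then show "\<exists>(V::nat set) H. is_hypergraph k V H \<and> separable k V H \<and> \<not> orderable k V H"
    using separable_not_orderable_example by blast
qed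

end
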